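(* Let $\sigma$ be any two-qubit density matrix of rank at most $2$. Then there exist single-qubit unitaries $U_A,U_B$ and parameters $\theta,\phi,\alpha\in[0,\pi/2]$, $\beta\in[0,2\pi]$, $\nu_1,\nu_2\in[0,1]$ with $\nu_1+\nu_2=1$ such that $(U_A\otimes U_B)\,\sigma\,(U_A\otimes U_B)^\dagger=\nu_1|\psi_1\rangle\langle\psi_1|+\nu_2|\psi_2\rangle\langle\psi_2|$, where $|\psi_1\rangle=\cos\theta|00\rangle+\sin\theta|11\rangle$ and $|\psi_2\rangle=\cos\phi(\cos\alpha|01\rangle+\sin\alpha|10\rangle)+e^{i\beta}\sin\phi(\sin\theta|00\rangle-\cos\theta|11\rangle)$.
   Context: Qubits are labelled so that the first tensor factor belongs to Alice and the second to Bob; $\{|0\rangle,|1\rangle\}$ is the computational basis and $|ij\rangle=|i\rangle\otimes|j\rangle$. *)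

theory Defs
  imports "Jordan_Normal_Form.Schur_Decomposition" "Jordan_Normal_Form.DL_Rank"
begin

text \<open>Kronecker (tensor) product; the first factor is the most significant index,
  so for 2x2 factors basis index 2*i+j corresponds to |ij> = |i> (x) |j>.\<close>
definition kron :: "complex mat \<Rightarrow> complex mat \<Rightarrow> complex mat" where
  "kron A B = mat (dim_row A * dim_row B) (dim_col A * dim_col B)
     (\<lambda>(i,j). A $$ (i div dim_row B, j div dim_col B) * B $$ (i mod dim_row B, j mod dim_col B))"

definition unitary_mat :: "nat \<Rightarrow> complex mat \<Rightarrow> bool" where
  "unitary_mat n U \<longleftrightarrow> U \<in> carrier_mat n n \<and> mat_adjoint U * U = 1\<^sub>m n"

definition hermitian_mat :: "complex mat \<Rightarrow> bool" where
  "hermitian_mat A \<longleftrightarrow> mat_adjoint A = A"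

definition psd_mat :: "nat \<Rightarrow> complex mat \<Rightarrow> bool" where
  "psd_mat n A \<longleftrightarrow> A \<in> carrier_mat n n \<and> hermitian_mat A \<and>
     (\<forall>v \<in> carrier_vec n. Im (conjugate v \<bullet> (A *\<^sub>v v)) = 0 \<and> Re (conjugate v \<bullet> (A *\<^sub>v v)) \<ge> 0)"

definition mat_trace :: "complex mat \<Rightarrow> complex" where
  "mat_trace A = (\<Sum>i<dim_row A. A $$ (i,i))"

definition density_mat :: "nat \<Rightarrow> complex mat \<Rightarrow> bool" where
  "density_mat n \<rho> \<longleftrightarrow> psd_mat n \<rho> \<and> mat_trace \<rho> = 1"

definition proj :: "complex vec \<Rightarrow> complex mat" where
  "proj v = mat (dim_vec v) (dim_vec v) (\<lambda>(i,j). v $ i * cnj (v $ j))"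

definition ket2 :: "nat \<Rightarrow> nat \<Rightarrow> complex vec" where
  "ket2 i j = unit_vec 4 (2 * i + j)"

end

(* Diagonalising sigma, the bound on its rank leaves at most two nonzero eigenvalues, so
   sigma = nu1 |v1><v1| + nu2 |v2><v2| with orthonormal v1, v2.  The singular value decomposition
   of the 2x2 coefficient matrix of v1 (its Schmidt decomposition) yields local unitaries taking
   v1 to cos theta |00> + sin theta |11>.  The image of v2 is orthogonal to this vector, hence equal
   to gamma (sin theta |00> - cos theta |11>) + a1 |01> + a2 |10>.  The local phases
   diag(1,eta) (x) diag(1,conj eta) fix |00> and |11>; together with a global phase, which does not
   change |v2><v2|, they make a1 and a2 nonnegative, and the angles phi, alpha, beta then
   parametrise the remaining unit vector. *)

theory Submission
  imports Defs
begin

lemma mat_adjoint_dim [simp]: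
  fixes A :: "complex mat"
  shows "dim_row (mat_adjoint A) = dim_col A" "dim_col (mat_adjoint A) = dim_row A"
  by (auto simp: mat_adjoint_def)

lemma mat_adjoint_index [simp]:
  fixes A :: "complex mat"
  shows "i < dim_col A \<Longrightarrow> j < dim_row A \<Longrightarrow> mat_adjoint A $$ (i,j) = cnj (A $$ (j,i))"
  by (simp add: mat_adjoint_def mat_of_rows_def)

lemma mat_adjoint_carrier [simp]:
  fixes A :: "complex mat"
  shows "A \<in> carrier_mat n m \<Longrightarrow> mat_adjoint A \<in> carrier_mat m n"
  unfolding carrier_mat_def by simp

lemma mat_adjoint_adjoint [simp]:
  fixes A :: "complex mat"
  shows "mat_adjoint (mat_adjoint A) = A"
  by (rule eq_matI) auto

lemma mat_adjoint_mult:
  fixes A :: "complex mat"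
  assumes "A \<in> carrier_mat n k" "B \<in> carrier_mat k m"
  shows "mat_adjoint (A * B) = mat_adjoint B * mat_adjoint A"
  by (rule eq_matI) (use assms in \<open>auto simp: scalar_prod_def mult.commute\<close>)

lemma mat_adjoint_one [simp]: "mat_adjoint (1\<^sub>m n) = (1\<^sub>m n :: complex mat)"
  by (rule eq_matI) auto

lemma mat_adjoint_zero [simp]: "mat_adjoint (0\<^sub>m n m) = (0\<^sub>m m n :: complex mat)"
  by (rule eq_matI) auto

lemma mat_adjoint_transpose:
  fixes A :: "complex mat"
  shows "mat_adjoint (transpose_mat A) = transpose_mat (mat_adjoint A)"
  by (rule eq_matI) auto

lemma mat_adjoint_four_block:
  fixes A :: "complex mat"
  assumes "A \<in> carrier_mat n1 m1" "B \<in> carrier_mat n1 m2" "C \<in> carrier_mat n2 m1"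
    "D \<in> carrier_mat n2 m2"
  shows "mat_adjoint (four_block_mat A B C D) =
    four_block_mat (mat_adjoint A) (mat_adjoint C) (mat_adjoint B) (mat_adjoint D)"
proof -
  have d: "dim_row A = n1" "dim_col A = m1" "dim_row B = n1" "dim_col B = m2"
    "dim_row C = n2" "dim_col C = m1" "dim_row D = n2" "dim_col D = m2" using assms by auto
  show ?thesis
  proof (rule eq_matI)
    fix i j
    assume "i < dim_row (four_block_mat (mat_adjoint A) (mat_adjoint C) (mat_adjoint B) (mat_adjoint D))"
      "j < dim_col (four_block_mat (mat_adjoint A) (mat_adjoint C) (mat_adjoint B) (mat_adjoint D))"
    then have i: "i < m1 + m2" and j: "j < n1 + n2" by (auto simp: d)
    have l: "mat_adjoint (four_block_mat A B C D) $$ (i,j) = cnj (four_block_mat A B C D $$ (j,i))"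
      by (rule mat_adjoint_index) (use i j in \<open>auto simp: d\<close>)
    show "mat_adjoint (four_block_mat A B C D) $$ (i,j) =
      four_block_mat (mat_adjoint A) (mat_adjoint C) (mat_adjoint B) (mat_adjoint D) $$ (i,j)"
      unfolding l using i j by (cases "i < m1"; cases "j < n1") (auto simp: d)
  qed (simp_all add: d)
qed

lemma unitary_matD:
  assumes "unitary_mat n U"
  shows "U \<in> carrier_mat n n" "mat_adjoint U * U = 1\<^sub>m n" "U * mat_adjoint U = 1\<^sub>m n"
  using assms mat_mult_left_right_inverse[of "mat_adjoint U" n U]
  by (auto simp: unitary_mat_def)

lemma unitary_mat_mult:
  assumes A: "unitary_mat n A" and B: "unitary_mat n B"
  shows "unitary_mat n (A * B)"
proof -
  have [simp]: "A \<in> carrier_mat n n" "B \<in> carrier_mat n n" using A B by (auto dest: unitary_matD)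
  have "mat_adjoint (A * B) * (A * B) = mat_adjoint B * (mat_adjoint A * A) * B"
    by (simp add: mat_adjoint_mult[of _ n n _ n] assoc_mult_mat[of _ n n _ n _ n] mult_carrier_mat[of _ n n])
  also have "\<dots> = 1\<^sub>m n" by (simp add: unitary_matD(2)[OF A] unitary_matD(2)[OF B] right_mult_one_mat[of _ n n])
  finally show ?thesis by (simp add: unitary_mat_def mult_carrier_mat[of _ n n])
qed

lemma unitary_mat_adjoint:
  assumes "unitary_mat n U"
  shows "unitary_mat n (mat_adjoint U)"
  using unitary_matD[OF assms] by (simp add: unitary_mat_def)

lemma unitary_mat_transpose:
  assumes U: "unitary_mat n U"
  shows "unitary_mat n (transpose_mat U)"
proof -
  have U': "U \<in> carrier_mat n n" "U * mat_adjoint U = 1\<^sub>m n" using unitary_matD[OF U] by auto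
  have "mat_adjoint (transpose_mat U) * transpose_mat U = transpose_mat (U * mat_adjoint U)"
    using U'(1) by (simp add: mat_adjoint_transpose transpose_mult[of _ n n _ n])
  also have "\<dots> = 1\<^sub>m n" using U'(2) by simp
  finally show ?thesis using U'(1) by (simp add: unitary_mat_def mat_adjoint_transpose)
qed

section \<open>Spectral theorem for Hermitian matrices\<close>

lemma cscalar_prod_self:
  fixes v :: "complex vec"
  shows "v \<bullet>c v = complex_of_real (\<Sum>i<dim_vec v. (cmod (v $ i))\<^sup>2)"
  unfolding scalar_prod_def by (simp add: atLeast0LessThan flip: complex_norm_square)

lemma complex_mat_has_eigenvector:
  fixes A :: "complex mat"
  assumes A: "A \<in> carrier_mat n n" and n: "n > 0"
  shows "\<exists>v e. v \<in> carrier_vec n \<and> v \<noteq> 0\<^sub>v n \<and> A *\<^sub>v v = e \<cdot>\<^sub>v v"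
proof -
  obtain as where cp: "char_poly A = (\<Prod>a\<leftarrow>as. [:-a,1:])" and len: "length as = n"
    using char_poly_factorized[OF A] by blast
  then obtain a where "a \<in> set as" using n by (cases as) auto
  then have "poly (char_poly A) a = 0" unfolding cp by (auto simp: poly_prod_list_zero_iff)
  then have "eigenvalue A a" using eigenvalue_root_char_poly[OF A] by simp
  then show ?thesis using find_eigenvector[OF A] A unfolding eigenvector_def by blast
qed

lemma unitary_mat_of_corthogonal_cols:
  fixes ws :: "complex vec list"
  assumes ws: "set ws \<subseteq> carrier_vec n" "corthogonal ws" "length ws = n"
  defines "c \<equiv> \<lambda>w. 1 / complex_of_real (sqrt (Re (w \<bullet>c w)))"
  shows "unitary_mat n (mat_of_cols n (map (\<lambda>w. c w \<cdot>\<^sub>v w) ws))"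
proof -
  define W where "W = mat_of_cols n (map (\<lambda>w. c w \<cdot>\<^sub>v w) ws)"
  have Wc: "W \<in> carrier_mat n n" unfolding W_def using ws by auto
  have colW: "col W i = c (ws ! i) \<cdot>\<^sub>v ws ! i" if "i < n" for i
    unfolding W_def using that ws by (subst col_mat_of_cols) auto
  have unit: "cnj (c w) * c w * (w \<bullet>c w) = 1" if "w \<bullet>c w \<noteq> 0" for w
  proof -
    define r where "r = (\<Sum>i<dim_vec w. (cmod (w $ i))\<^sup>2)"
    have r: "w \<bullet>c w = complex_of_real r" "r \<ge> 0"
      unfolding r_def by (rule cscalar_prod_self) (simp add: sum_nonneg)
    then have "r > 0" using that by auto
    then show ?thesis unfolding c_def r by (simp add: field_simps flip: of_real_mult)
  qed
  have "mat_adjoint W * W = 1\<^sub>m n"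
  proof (rule eq_matI)
    fix i j assume "i < dim_row (1\<^sub>m n)" "j < dim_col (1\<^sub>m n)"
    then have i: "i < n" and j: "j < n" by auto
    have wi: "ws ! i \<in> carrier_vec n" and wj: "ws ! j \<in> carrier_vec n" using ws i j by auto
    have "(mat_adjoint W * W) $$ (i,j) = col W j \<bullet>c col W i"
      using Wc i j by (simp add: scalar_prod_def mult.commute)
    also have "\<dots> = cnj (c (ws ! i)) * c (ws ! j) * (ws ! j \<bullet>c ws ! i)"
      using wi wj by (simp add: colW i j conjugate_smult_vec)
    also have "\<dots> = 1\<^sub>m n $$ (i,j)"
      using corthogonalD[OF ws(2)] ws(3) i j unit[of "ws ! i"] by auto
    finally show "(mat_adjoint W * W) $$ (i,j) = 1\<^sub>m n $$ (i,j)" .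
  qed (use Wc in auto)
  with Wc show ?thesis unfolding unitary_mat_def W_def by blast
qed

lemma unitary_mat_with_first_col:
  fixes v :: "complex vec"
  assumes v: "v \<in> carrier_vec n" and v0: "v \<noteq> 0\<^sub>v n"
  shows "\<exists>W c. unitary_mat n W \<and> col W 0 = c \<cdot>\<^sub>v v"
proof -
  interpret cof_vec_space n "TYPE(complex)" .
  define b where "b = basis_completion v"
  from basis_completion[OF v v0, folded b_def]
  have dist_b: "distinct b" and indep: "\<not> lin_dep (set b)" and b: "set b \<subseteq> carrier_vec n"
    and hdb: "hd b = v" and len_b: "length b = n" by auto
  have n: "n > 0" using v v0 by (cases n) auto
  from hdb len_b n obtain vs where bv: "b = v # vs" by (cases b) auto
  define ws where "ws = gram_schmidt n b"
  from gram_schmidt_result[OF b dist_b indep refl, folded ws_def]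
  have ws: "set ws \<subseteq> carrier_vec n" "corthogonal ws" "length ws = n" by (auto simp: len_b)
  from gram_schmidt_hd[OF v, of vs, folded bv] have "hd ws = v" unfolding ws_def .
  then have ws0: "ws ! 0 = v" using ws(3) n by (cases ws) auto
  define c where "c = (\<lambda>w. 1 / complex_of_real (sqrt (Re (w \<bullet>c w))))"
  define W where "W = mat_of_cols n (map (\<lambda>w. c w \<cdot>\<^sub>v w) ws)"
  have "col W 0 = c v \<cdot>\<^sub>v v" unfolding W_def using ws ws0 n by (subst col_mat_of_cols) auto
  moreover have "unitary_mat n W" unfolding W_def c_def by (rule unitary_mat_of_corthogonal_cols[OF ws])
  ultimately show ?thesis by blast
qed

lemma hermitian_mat_adjoint_conj:
  fixes A W :: "complex mat"
  assumes A: "A \<in> carrier_mat n n" "hermitian_mat A" and W: "W \<in> carrier_mat n n"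
  shows "hermitian_mat (mat_adjoint W * A * W)"
  using A W unfolding hermitian_mat_def
  by (simp add: mat_adjoint_mult[of _ n n _ n] assoc_mult_mat[of _ n n _ n _ n] mult_carrier_mat[of _ n n])

lemma unitary_conj_eigenvector_col:
  fixes A :: "complex mat"
  assumes A: "A \<in> carrier_mat n n" and W: "unitary_mat n W"
    and ev: "A *\<^sub>v col W 0 = e \<cdot>\<^sub>v col W 0" and i: "i < n"
  shows "(mat_adjoint W * A * W) $$ (i,0) = (if i = 0 then e else 0)"
proof -
  note W' = unitary_matD[OF W]
  have "(mat_adjoint W * A * W) $$ (i,0) = (mat_adjoint W * (A * W)) $$ (i,0)"
    using W' A by (simp add: assoc_mult_mat[of _ n n _ n _ n])
  also have "\<dots> = row (mat_adjoint W) i \<bullet> (A *\<^sub>v col W 0)"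
    using W' A i by (simp add: col_mult2[OF A W'(1)] mult_mat_vec_def)
  also have "\<dots> = e * (mat_adjoint W * W) $$ (i,0)" unfolding ev using W'(1) i by simp
  also have "(mat_adjoint W * W) $$ (i,0) = 1\<^sub>m n $$ (i,0)" by (simp only: W'(2))
  finally show ?thesis using i by simp
qed

lemma hermitian_unitary_deflation:
  fixes A :: "complex mat"
  assumes A: "A \<in> carrier_mat (Suc m) (Suc m)" and herm: "hermitian_mat A"
    and W: "unitary_mat (Suc m) W" and ev: "A *\<^sub>v col W 0 = e \<cdot>\<^sub>v col W 0"
  shows "\<exists>A3. A3 \<in> carrier_mat m m \<and> hermitian_mat A3 \<and>
    mat_adjoint W * A * W = four_block_mat (mat 1 1 (\<lambda>_. e)) (0\<^sub>m 1 m) (0\<^sub>m m 1) A3"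
proof -
  define A' where "A' = mat_adjoint W * A * W"
  have A'c: "A' \<in> carrier_mat (Suc m) (Suc m)" unfolding A'_def using unitary_matD(1)[OF W] A by auto
  have A'h: "mat_adjoint A' = A'"
    using hermitian_mat_adjoint_conj[OF A herm unitary_matD(1)[OF W]] by (simp add: A'_def hermitian_mat_def)
  note col0 = unitary_conj_eigenvector_col[OF A W ev, folded A'_def]
  have row0: "A' $$ (0,j) = 0" if j: "0 < j" "j < Suc m" for j
  proof -
    have "A' $$ (0,j) = cnj (A' $$ (j,0))"
      using A'c j mat_adjoint_index[of 0 A' j] by (simp add: A'h)
    then show ?thesis using col0[OF j(2)] j by simp
  qed
  define A3 where "A3 = mat m m (\<lambda>(i,j). A' $$ (Suc i, Suc j))"
  have "A' = four_block_mat (mat 1 1 (\<lambda>_. e)) (0\<^sub>m 1 m) (0\<^sub>m m 1) A3"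
    by (rule eq_matI) (use A'c col0 row0 in \<open>auto simp: A3_def\<close>)
  moreover have "hermitian_mat A3"
    unfolding hermitian_mat_def
  proof (rule eq_matI)
    fix i j assume "i < dim_row A3" "j < dim_col A3"
    then have i: "i < m" and j: "j < m" by (auto simp: A3_def)
    have "cnj (A' $$ (Suc j, Suc i)) = mat_adjoint A' $$ (Suc i, Suc j)" using A'c i j by simp
    then show "mat_adjoint A3 $$ (i,j) = A3 $$ (i,j)" using i j by (simp add: A3_def A'h)
  qed (auto simp: A3_def)
  moreover have "A3 \<in> carrier_mat m m" by (simp add: A3_def)
  ultimately show ?thesis unfolding A'_def by blast
qed

lemma unitary_mat_block_diag:
  assumes U: "unitary_mat m U"
  shows "unitary_mat (Suc m) (four_block_mat (1\<^sub>m 1) (0\<^sub>m 1 m) (0\<^sub>m m 1) U)"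
proof -
  note U' = unitary_matD[OF U]
  have "mat_adjoint (four_block_mat (1\<^sub>m 1) (0\<^sub>m 1 m) (0\<^sub>m m 1) U) *
      four_block_mat (1\<^sub>m 1) (0\<^sub>m 1 m) (0\<^sub>m m 1) U =
    four_block_mat (1\<^sub>m 1) (0\<^sub>m 1 m) (0\<^sub>m m 1) (mat_adjoint U * U)"
    using U' by (simp add: mat_adjoint_four_block[of _ 1 1 _ m _ m] mult_four_block_mat[of _ 1 1 _ m _ m _ _ 1 _ m])
  also have "\<dots> = 1\<^sub>m (Suc m)" using U'(2) four_block_one_mat[of 1 m] by simp
  moreover have "four_block_mat (1\<^sub>m 1) (0\<^sub>m 1 m) (0\<^sub>m m 1) U \<in> carrier_mat (Suc m) (Suc m)"
    using four_block_carrier_mat[OF one_carrier_mat[of 1] U'(1), where B = "0\<^sub>m 1 m" and C = "0\<^sub>m m 1"] by simp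
  ultimately show ?thesis by (simp add: unitary_mat_def)
qed

lemma block_diag_conj:
  fixes U D :: "complex mat"
  assumes "U \<in> carrier_mat m m" "D \<in> carrier_mat m m"
  shows "four_block_mat (mat 1 1 (\<lambda>_. e)) (0\<^sub>m 1 m) (0\<^sub>m m 1) (U * D * mat_adjoint U) =
    four_block_mat (1\<^sub>m 1) (0\<^sub>m 1 m) (0\<^sub>m m 1) U *
    four_block_mat (mat 1 1 (\<lambda>_. e)) (0\<^sub>m 1 m) (0\<^sub>m m 1) D *
    mat_adjoint (four_block_mat (1\<^sub>m 1) (0\<^sub>m 1 m) (0\<^sub>m m 1) U)"
  using assms
  by (simp add: mult_carrier_mat[of _ m m] mat_adjoint_four_block[of _ 1 1 _ m _ m]
      mult_four_block_mat[of _ 1 1 _ m _ m _ _ 1 _ m])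

lemma unitary_conj_solve:
  assumes W: "unitary_mat n W" and A: "A \<in> carrier_mat n n" and M: "mat_adjoint W * A * W = M"
  shows "A = W * M * mat_adjoint W"
proof -
  note W' = unitary_matD[OF W]
  have "A = (W * mat_adjoint W) * A * (W * mat_adjoint W)" unfolding W'(3) using A by simp
  also have "\<dots> = W * (mat_adjoint W * A * W) * mat_adjoint W"
    using A W'(1) by (simp add: assoc_mult_mat[of _ n n _ n _ n] mult_carrier_mat[of _ n n])
  finally show ?thesis unfolding M .
qed

theorem hermitian_unitary_diagonalization:
  fixes A :: "complex mat"
  assumes "A \<in> carrier_mat n n" and "hermitian_mat A"
  shows "\<exists>U D. unitary_mat n U \<and> D \<in> carrier_mat n n \<and> diagonal_mat D \<and> A = U * D * mat_adjoint U"
  using assms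
proof (induction n arbitrary: A)
  case 0
  then show ?case
    by (intro exI[of _ "1\<^sub>m 0"] exI[of _ "0\<^sub>m 0 0"])
       (auto simp: unitary_mat_def diagonal_mat_def)
next
  case (Suc m)
  note A = Suc.prems(1)
  obtain v e where v: "v \<in> carrier_vec (Suc m)" "v \<noteq> 0\<^sub>v (Suc m)" and ev: "A *\<^sub>v v = e \<cdot>\<^sub>v v"
    using complex_mat_has_eigenvector[OF A] by blast
  obtain W c where W: "unitary_mat (Suc m) W" and cW: "col W 0 = c \<cdot>\<^sub>v v"
    using unitary_mat_with_first_col[OF v] by blast
  note W' = unitary_matD[OF W]
  have "A *\<^sub>v col W 0 = e \<cdot>\<^sub>v col W 0"
    unfolding cW using A v ev by (simp add: mult_mat_vec smult_smult_assoc mult.commute)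
  then obtain A3 where A3: "A3 \<in> carrier_mat m m" "hermitian_mat A3"
    and A': "mat_adjoint W * A * W = four_block_mat (mat 1 1 (\<lambda>_. e)) (0\<^sub>m 1 m) (0\<^sub>m m 1) A3"
    using hermitian_unitary_deflation[OF A Suc.prems(2) W] by blast
  obtain U3 D3 where U3: "unitary_mat m U3" and D3: "D3 \<in> carrier_mat m m" "diagonal_mat D3"
    and A3e: "A3 = U3 * D3 * mat_adjoint U3"
    using Suc.IH[OF A3] by blast
  define B where "B = four_block_mat (1\<^sub>m 1) (0\<^sub>m 1 m) (0\<^sub>m m 1) U3"
  define D where "D = four_block_mat (mat 1 1 (\<lambda>_. e)) (0\<^sub>m 1 m) (0\<^sub>m m 1) D3"
  have B: "unitary_mat (Suc m) B" unfolding B_def using U3 by (rule unitary_mat_block_diag)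
  note B' = unitary_matD[OF B]
  have Dc: "D \<in> carrier_mat (Suc m) (Suc m)" unfolding D_def using D3 by auto
  have "diagonal_mat D"
    using D3 unfolding D_def diagonal_mat_def by auto
  moreover have "A = (W * B) * D * mat_adjoint (W * B)"
  proof -
    have "mat_adjoint W * A * W = B * D * mat_adjoint B"
      unfolding A' A3e B_def D_def using unitary_matD(1)[OF U3] D3(1) by (rule block_diag_conj)
    then have "A = W * (B * D * mat_adjoint B) * mat_adjoint W" by (rule unitary_conj_solve[OF W A])
    also have "\<dots> = (W * B) * D * mat_adjoint (W * B)"
      using W'(1) B'(1) Dc
      by (simp add: mat_adjoint_mult[of _ "Suc m" "Suc m" _ "Suc m"]
          assoc_mult_mat[of _ "Suc m" "Suc m" _ "Suc m" _ "Suc m"] mult_carrier_mat[of _ "Suc m" "Suc m"])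
    finally show ?thesis .
  qed
  moreover have "unitary_mat (Suc m) (W * B)" using W B by (rule unitary_mat_mult)
  ultimately show ?case using Dc by blast
qed

section \<open>Density matrices of rank at most two\<close>

lemma proj_dim [simp]: "dim_row (proj v) = dim_vec v" "dim_col (proj v) = dim_vec v"
  by (auto simp: proj_def)

lemma proj_index [simp]: "a < dim_vec v \<Longrightarrow> b < dim_vec v \<Longrightarrow> proj v $$ (a,b) = v $ a * cnj (v $ b)"
  by (simp add: proj_def)

lemma proj_carrier [simp]: "v \<in> carrier_vec n \<Longrightarrow> proj v \<in> carrier_mat n n"
  by (intro carrier_matI) auto

lemma unitary_conj_diagonal_index:
  fixes U D :: "complex mat"
  assumes U: "U \<in> carrier_mat n n" and D: "D \<in> carrier_mat n n" "diagonal_mat D"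
    and a: "a < n" and b: "b < n"
  shows "(U * D * mat_adjoint U) $$ (a,b) = (\<Sum>k<n. U $$ (a,k) * D $$ (k,k) * cnj (U $$ (b,k)))"
proof -
  have UD: "(U * D) $$ (a,l) = U $$ (a,l) * D $$ (l,l)" if l: "l < n" for l
  proof -
    have "(U * D) $$ (a,l) = (\<Sum>k<n. U $$ (a,k) * D $$ (k,l))"
      using U D a l by (simp add: scalar_prod_def atLeast0LessThan)
    also have "\<dots> = (\<Sum>k<n. if k = l then U $$ (a,l) * D $$ (l,l) else 0)"
      by (rule sum.cong) (use D l in \<open>auto simp: diagonal_mat_def\<close>)
    finally show ?thesis using l by simp
  qed
  have "(U * D * mat_adjoint U) $$ (a,b) = (\<Sum>l<n. (U * D) $$ (a,l) * cnj (U $$ (b,l)))"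
    using U D a b by (simp add: scalar_prod_def atLeast0LessThan)
  then show ?thesis by (simp add: UD)
qed

lemma psd_unitary_conj_diagonal_nonneg:
  fixes A :: "complex mat"
  assumes A: "psd_mat n A" and U: "unitary_mat n U" and D: "D \<in> carrier_mat n n"
    and AD: "A = U * D * mat_adjoint U" and k: "k < n"
  shows "Im (D $$ (k,k)) = 0 \<and> Re (D $$ (k,k)) \<ge> 0"
proof -
  note U' = unitary_matD[OF U]
  have Ac: "A \<in> carrier_mat n n" using A by (simp add: psd_mat_def)
  have [simp]: "mat_adjoint U \<in> carrier_mat n n" using U' by simp
  have "D = (mat_adjoint U * U) * D * (mat_adjoint U * U)" unfolding U'(2) using D by simp
  also have "\<dots> = mat_adjoint U * A * U"
    unfolding AD using U'(1) D by (simp add: assoc_mult_mat[of _ n n _ n _ n] mult_carrier_mat[of _ n n])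
  finally have "D $$ (k,k) = (mat_adjoint U * (A * U)) $$ (k,k)"
    using U'(1) Ac by (simp add: assoc_mult_mat[of _ n n _ n _ n] mult_carrier_mat[of _ n n])
  also have "\<dots> = row (mat_adjoint U) k \<bullet> (A *\<^sub>v col U k)"
    using U' Ac k by (simp add: col_mult2[OF Ac U'(1)] mult_mat_vec_def)
  also have "row (mat_adjoint U) k = conjugate (col U k)"
    using U' k by (intro eq_vecI) auto
  finally have Dk: "D $$ (k,k) = conjugate (col U k) \<bullet> (A *\<^sub>v col U k)" .
  have "col U k \<in> carrier_vec n" using U'(1) by (simp add: carrier_vecI)
  with A show ?thesis unfolding Dk psd_mat_def by blast
qed

lemma unitary_det_nonzero:
  assumes "unitary_mat n U"
  shows "det U \<noteq> 0" "det (mat_adjoint U) \<noteq> 0"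
  using det_mult[of "mat_adjoint U" n U] unitary_matD[OF assms] by auto

lemma det_diagonal_nonzero:
  fixes D :: "complex mat"
  assumes D: "D \<in> carrier_mat n n" "diagonal_mat D" and nz: "\<And>k. k < n \<Longrightarrow> D $$ (k,k) \<noteq> 0"
  shows "det D \<noteq> 0"
proof -
  have "upper_triangular D" using D by (auto simp: diagonal_mat_def upper_triangular_def)
  then have "det D = prod_list (diag_mat D)" using D(1) by (rule det_upper_triangular)
  moreover have "0 \<notin> set (diag_mat D)" using nz D(1) by (auto simp: diag_mat_def)
  ultimately show ?thesis by simp
qed

lemma unitary_conj_diagonal_unit:
  fixes U :: "complex mat"
  assumes U: "U \<in> carrier_mat n n" and e: "e < n"
  shows "U * mat n n (\<lambda>(i,j). if i = e \<and> j = e then 1 else 0) * mat_adjoint U = proj (col U e)"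
proof (rule eq_matI)
  fix a b assume "a < dim_row (proj (col U e))" "b < dim_col (proj (col U e))"
  then have a: "a < n" and b: "b < n" using U by auto
  define E where "E = mat n n (\<lambda>(i,j). if i = e \<and> j = e then 1 else (0::complex))"
  have E: "E \<in> carrier_mat n n" "diagonal_mat E" by (auto simp: E_def diagonal_mat_def)
  have "(U * E * mat_adjoint U) $$ (a,b) = (\<Sum>k<n. if k = e then U $$ (a,e) * cnj (U $$ (b,e)) else 0)"
    unfolding unitary_conj_diagonal_index[OF U E a b] by (rule sum.cong) (auto simp: E_def)
  then show "(U * mat n n (\<lambda>(i,j). if i = e \<and> j = e then 1 else 0) * mat_adjoint U) $$ (a,b) =
      proj (col U e) $$ (a,b)"
    using U a b e by (simp add: E_def)
qed (use U in auto)

text \<open>Adding the projection onto the \<open>e\<close>-th eigenvector makes the matrix invertible.\<close>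
lemma unitary_conj_diagonal_rank_ge:
  fixes U D :: "complex mat"
  assumes U: "unitary_mat n U" and D: "D \<in> carrier_mat n n" "diagonal_mat D"
    and e: "e < n" "D $$ (e,e) + 1 \<noteq> 0"
    and nz: "\<And>k. k < n \<Longrightarrow> k \<noteq> e \<Longrightarrow> D $$ (k,k) \<noteq> 0"
  shows "n \<le> vec_space.rank n (U * D * mat_adjoint U) + 1"
proof -
  interpret vec_space "TYPE(complex)" n .
  note U' = unitary_matD[OF U]
  define A where "A = U * D * mat_adjoint U"
  define u where "u = col U e"
  define E where "E = mat n n (\<lambda>(i,j). if i = e \<and> j = e then 1 else (0::complex))"
  have Ac: "A \<in> carrier_mat n n" and uc: "u \<in> carrier_vec n" and Ec: "E \<in> carrier_mat n n"
    unfolding A_def u_def E_def using U' D by (auto simp: carrier_vecI)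
  have "A + proj u = U * (D + E) * mat_adjoint U"
    using U'(1) D Ec unitary_conj_diagonal_unit[OF U'(1) e(1)]
    by (simp add: A_def u_def E_def mult_add_distrib_mat[OF U'(1), of _ n] add_mult_distrib_mat[of _ n n _ _ n])
  moreover have "det (D + E) \<noteq> 0"
    by (rule det_diagonal_nonzero) (use D Ec e nz in \<open>auto simp: E_def diagonal_mat_def split: if_splits\<close>)
  ultimately have "det (A + proj u) \<noteq> 0"
    using det_mult[OF mult_carrier_mat[OF U'(1)] mat_adjoint_carrier[OF U'(1)], of "D + E"]
      det_mult[OF U'(1), of "D + E"] unitary_det_nonzero[OF U] D(1) Ec by simp
  then have "n = rank (A + proj u)" using Ac uc by (simp add: low_rank_det_zero)
  also have "\<dots> \<le> rank A + rank (proj u)" using Ac uc by (simp add: rank_subadditive)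
  also have "rank (proj u) \<le> 1"
    by (rule rank_le_1_product_entries[where f = "\<lambda>r. u $ r" and g = "\<lambda>c. cnj (u $ c)"]) (use uc in auto)
  finally show ?thesis unfolding A_def by simp
qed

lemma psd_low_rank_two_zero_eigenvalues:
  fixes U D :: "complex mat"
  assumes U: "unitary_mat n U" and D: "D \<in> carrier_mat n n" "diagonal_mat D"
    and nonneg: "\<And>k. k < n \<Longrightarrow> Im (D $$ (k,k)) = 0 \<and> Re (D $$ (k,k)) \<ge> 0"
    and rank: "vec_space.rank n (U * D * mat_adjoint U) + 2 \<le> n"
  shows "\<exists>k1<n. \<exists>k2<n. k1 \<noteq> k2 \<and> D $$ (k1,k1) = 0 \<and> D $$ (k2,k2) = 0"
proof -
  have other_zero: "\<exists>k<n. k \<noteq> e \<and> D $$ (k,k) = 0" if e: "e < n" for e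
  proof (rule ccontr)
    assume "\<not> ?thesis"
    then have nz: "\<And>k. k < n \<Longrightarrow> k \<noteq> e \<Longrightarrow> D $$ (k,k) \<noteq> 0" by blast
    have "Re (D $$ (e,e) + 1) > 0" using nonneg[OF e] by simp
    then have "D $$ (e,e) + 1 \<noteq> 0" by force
    from unitary_conj_diagonal_rank_ge[OF U D e this nz] rank show False by simp
  qed
  obtain k1 where k1: "k1 < n" "D $$ (k1,k1) = 0" using other_zero[of 0] rank by auto
  then obtain k2 where "k2 < n" "k2 \<noteq> k1" "D $$ (k2,k2) = 0" using other_zero by blast
  with k1 show ?thesis by blast
qed

lemma unitary_col_orthonormal:
  assumes U: "unitary_mat n U" and i: "i < n" and j: "j < n"
  shows "col U j \<bullet>c col U i = (if i = j then 1 else 0)"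
proof -
  note U' = unitary_matD[OF U]
  have "col U j \<bullet>c col U i = (mat_adjoint U * U) $$ (i,j)"
    using U'(1) i j by (simp add: scalar_prod_def mult.commute)
  then show ?thesis using U'(2) i j by simp
qed

lemma mat_trace_unitary_conj_diagonal:
  fixes U D :: "complex mat"
  assumes U: "unitary_mat n U" and D: "D \<in> carrier_mat n n" "diagonal_mat D"
  shows "mat_trace (U * D * mat_adjoint U) = (\<Sum>k<n. D $$ (k,k))"
proof -
  note U' = unitary_matD[OF U]
  have "mat_trace (U * D * mat_adjoint U) = (\<Sum>a<n. \<Sum>k<n. D $$ (k,k) * (U $$ (a,k) * cnj (U $$ (a,k))))"
    unfolding mat_trace_def using U'(1) D
    by (intro sum.cong) (auto simp del: index_mult_mat(1)
        simp: unitary_conj_diagonal_index[OF U'(1) D] algebra_simps)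
  also have "\<dots> = (\<Sum>k<n. D $$ (k,k) * (col U k \<bullet>c col U k))"
    using U'(1) by (subst sum.swap) (simp add: sum_distrib_left scalar_prod_def atLeast0LessThan)
  also have "\<dots> = (\<Sum>k<n. D $$ (k,k))"
    by (rule sum.cong) (simp_all add: unitary_col_orthonormal[OF U])
  finally show ?thesis .
qed

lemma sum_two_support:
  fixes n :: nat
  assumes "i < n" "j < n" "i \<noteq> j" and "\<And>k. k < n \<Longrightarrow> k \<noteq> i \<Longrightarrow> k \<noteq> j \<Longrightarrow> f k = 0"
  shows "(\<Sum>k<n. f k) = f i + (f j :: 'a :: comm_monoid_add)"
proof -
  have "(\<Sum>k<n. f k) = (\<Sum>k\<in>{i,j}. f k)" by (rule sum.mono_neutral_right) (use assms in auto)
  then show ?thesis using assms(3) by simp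
qed

lemma unitary_conj_diagonal_two_support:
  fixes U D :: "complex mat"
  assumes U: "U \<in> carrier_mat n n" and D: "D \<in> carrier_mat n n" "diagonal_mat D"
    and ij: "i < n" "j < n" "i \<noteq> j" and zero: "\<And>k. k < n \<Longrightarrow> k \<noteq> i \<Longrightarrow> k \<noteq> j \<Longrightarrow> D $$ (k,k) = 0"
  shows "U * D * mat_adjoint U = D $$ (i,i) \<cdot>\<^sub>m proj (col U i) + D $$ (j,j) \<cdot>\<^sub>m proj (col U j)"
proof (rule eq_matI)
  fix a b assume "a < dim_row (D $$ (i,i) \<cdot>\<^sub>m proj (col U i) + D $$ (j,j) \<cdot>\<^sub>m proj (col U j))"
    "b < dim_col (D $$ (i,i) \<cdot>\<^sub>m proj (col U i) + D $$ (j,j) \<cdot>\<^sub>m proj (col U j))"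
  then have a: "a < n" and b: "b < n" using U by auto
  have "(U * D * mat_adjoint U) $$ (a,b) =
      U $$ (a,i) * D $$ (i,i) * cnj (U $$ (b,i)) + U $$ (a,j) * D $$ (j,j) * cnj (U $$ (b,j))"
    unfolding unitary_conj_diagonal_index[OF U D a b] by (rule sum_two_support) (use ij zero in auto)
  then show "(U * D * mat_adjoint U) $$ (a,b) =
      (D $$ (i,i) \<cdot>\<^sub>m proj (col U i) + D $$ (j,j) \<cdot>\<^sub>m proj (col U j)) $$ (a,b)"
    using U a b ij by (simp add: algebra_simps)
qed (use U in auto)

lemma density_mat_rank_le_2_mixture:
  fixes \<sigma> :: "complex mat"
  assumes dens: "density_mat 4 \<sigma>" and rank: "vec_space.rank 4 \<sigma> \<le> 2"
  shows "\<exists>v1 v2 (\<nu>1::real) \<nu>2. v1 \<in> carrier_vec 4 \<and> v2 \<in> carrier_vec 4 \<and>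
    v1 \<bullet>c v1 = 1 \<and> v2 \<bullet>c v2 = 1 \<and> v2 \<bullet>c v1 = 0 \<and> \<nu>1 \<ge> 0 \<and> \<nu>2 \<ge> 0 \<and> \<nu>1 + \<nu>2 = 1 \<and>
    \<sigma> = complex_of_real \<nu>1 \<cdot>\<^sub>m proj v1 + complex_of_real \<nu>2 \<cdot>\<^sub>m proj v2"
proof -
  have psd: "psd_mat 4 \<sigma>" and "\<sigma> \<in> carrier_mat 4 4" "hermitian_mat \<sigma>"
    using dens by (auto simp: density_mat_def psd_mat_def)
  then obtain U D where U: "unitary_mat 4 U" and D: "D \<in> carrier_mat 4 4" "diagonal_mat D"
    and \<sigma>: "\<sigma> = U * D * mat_adjoint U"
    using hermitian_unitary_diagonalization by blast
  have nonneg: "Im (D $$ (k,k)) = 0 \<and> Re (D $$ (k,k)) \<ge> 0" if "k < 4" for k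
    using psd_unitary_conj_diagonal_nonneg[OF psd U D(1) \<sigma> that] .
  obtain k1 k2 where k: "k1 < 4" "k2 < 4" "k1 \<noteq> k2" "D $$ (k1,k1) = 0" "D $$ (k2,k2) = 0"
    using psd_low_rank_two_zero_eigenvalues[OF U D nonneg] rank \<sigma> by fastforce
  have "card ({..<4} - {k1,k2}) = 2" using k by (simp add: card_Diff_subset)
  then obtain i j where ij: "{..<4} - {k1,k2} = {i,j}" "i \<noteq> j" by (auto simp: card_2_iff)
  then have ij4: "i < 4" "j < 4" by auto
  have zero: "D $$ (k,k) = 0" if "k < 4" "k \<noteq> i" "k \<noteq> j" for k using that ij k by auto
  define \<nu>1 where "\<nu>1 = Re (D $$ (i,i))"
  define \<nu>2 where "\<nu>2 = Re (D $$ (j,j))"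
  have \<nu>: "D $$ (i,i) = complex_of_real \<nu>1" "D $$ (j,j) = complex_of_real \<nu>2"
    unfolding \<nu>1_def \<nu>2_def using nonneg ij4 by (simp_all add: complex_eq_iff)
  have "(\<Sum>k<4. D $$ (k,k)) = D $$ (i,i) + D $$ (j,j)" by (rule sum_two_support[OF ij4 ij(2) zero])
  then have "complex_of_real (\<nu>1 + \<nu>2) = mat_trace \<sigma>"
    unfolding \<sigma> mat_trace_unitary_conj_diagonal[OF U D] \<nu> by simp
  then have "complex_of_real (\<nu>1 + \<nu>2) = 1" using dens by (simp add: density_mat_def)
  then have "\<nu>1 + \<nu>2 = 1" by (simp only: of_real_eq_1_iff)
  moreover have "\<sigma> = complex_of_real \<nu>1 \<cdot>\<^sub>m proj (col U i) + complex_of_real \<nu>2 \<cdot>\<^sub>m proj (col U j)"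
    unfolding \<sigma> \<nu>[symmetric] using unitary_matD(1)[OF U] D ij4 ij(2) zero
    by (rule unitary_conj_diagonal_two_support)
  moreover have "col U i \<in> carrier_vec 4" "col U j \<in> carrier_vec 4"
    using unitary_matD(1)[OF U] by (auto simp: carrier_vecI)
  moreover have "\<nu>1 \<ge> 0" "\<nu>2 \<ge> 0" unfolding \<nu>1_def \<nu>2_def using nonneg ij4 by auto
  moreover have "col U i \<bullet>c col U i = 1" "col U j \<bullet>c col U j = 1" "col U j \<bullet>c col U i = 0"
    using unitary_col_orthonormal[OF U] ij ij4 by auto
  ultimately show ?thesis by blast
qed

lemma mult_mat_vec_cscalar_prod:
  fixes A :: "complex mat"
  assumes A: "A \<in> carrier_mat n m" and a: "a \<in> carrier_vec m" and b: "b \<in> carrier_vec n"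
  shows "(A *\<^sub>v a) \<bullet>c b = a \<bullet>c (mat_adjoint A *\<^sub>v b)"
proof -
  have "(A *\<^sub>v a) \<bullet>c b = (\<Sum>i<n. \<Sum>k<m. A $$ (i,k) * a $ k * cnj (b $ i))"
    using A a b by (simp add: scalar_prod_def atLeast0LessThan sum_distrib_right)
  also have "\<dots> = (\<Sum>k<m. \<Sum>i<n. A $$ (i,k) * a $ k * cnj (b $ i))" by (rule sum.swap)
  also have "\<dots> = a \<bullet>c (mat_adjoint A *\<^sub>v b)"
    using A a b by (simp add: scalar_prod_def atLeast0LessThan sum_distrib_left algebra_simps)
  finally show ?thesis .
qed

lemma unitary_cscalar_prod:
  assumes U: "unitary_mat n U" and a: "a \<in> carrier_vec n" and b: "b \<in> carrier_vec n"
  shows "(U *\<^sub>v a) \<bullet>c (U *\<^sub>v b) = a \<bullet>c b"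
proof -
  note U' = unitary_matD[OF U]
  have "(U *\<^sub>v a) \<bullet>c (U *\<^sub>v b) = a \<bullet>c ((mat_adjoint U * U) *\<^sub>v b)"
    using U'(1) a b
    by (simp add: mult_mat_vec_cscalar_prod[of _ n n] assoc_mult_mat_vec[OF mat_adjoint_carrier[OF U'(1)] U'(1) b])
  then show ?thesis using U'(2) b by simp
qed

lemma mult_proj_adjoint:
  fixes W :: "complex mat"
  assumes W: "W \<in> carrier_mat n n" and v: "v \<in> carrier_vec n"
  shows "W * proj v * mat_adjoint W = proj (W *\<^sub>v v)"
proof (rule eq_matI)
  fix a b assume "a < dim_row (proj (W *\<^sub>v v))" "b < dim_col (proj (W *\<^sub>v v))"
  then have a: "a < n" and b: "b < n" using W by auto
  have Wv: "(W *\<^sub>v v) $ i = (\<Sum>k<n. W $$ (i,k) * v $ k)" if "i < n" for i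
    using W v that by (simp add: scalar_prod_def atLeast0LessThan)
  have "(W * proj v * mat_adjoint W) $$ (a,b) = (\<Sum>l<n. \<Sum>k<n. W $$ (a,k) * (v $ k * cnj (v $ l)) * cnj (W $$ (b,l)))"
    using W v a b by (simp add: scalar_prod_def atLeast0LessThan sum_distrib_right)
  also have "\<dots> = (W *\<^sub>v v) $ a * cnj ((W *\<^sub>v v) $ b)"
    by (simp add: Wv a b sum_distrib_left sum_distrib_right algebra_simps)
  finally show "(W * proj v * mat_adjoint W) $$ (a,b) = proj (W *\<^sub>v v) $$ (a,b)"
    using W a b by simp
qed (use W in auto)

lemma mult_mixture_adjoint:
  fixes W :: "complex mat"
  assumes W: "W \<in> carrier_mat n n" and v1: "v1 \<in> carrier_vec n" and v2: "v2 \<in> carrier_vec n"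
  shows "W * (a \<cdot>\<^sub>m proj v1 + b \<cdot>\<^sub>m proj v2) * mat_adjoint W =
    a \<cdot>\<^sub>m proj (W *\<^sub>v v1) + b \<cdot>\<^sub>m proj (W *\<^sub>v v2)"
proof -
  have [simp]: "proj v1 \<in> carrier_mat n n" "proj v2 \<in> carrier_mat n n" "mat_adjoint W \<in> carrier_mat n n"
    using v1 v2 W by auto
  have "W * (a \<cdot>\<^sub>m proj v1 + b \<cdot>\<^sub>m proj v2) * mat_adjoint W =
      a \<cdot>\<^sub>m (W * proj v1 * mat_adjoint W) + b \<cdot>\<^sub>m (W * proj v2 * mat_adjoint W)"
    using W by (simp add: mult_add_distrib_mat[OF W, of _ n] add_mult_distrib_mat[of _ n n _ "mat_adjoint W" n]
        mult_smult_distrib[OF W, of _ n] mult_smult_assoc_mat[of _ n n _ n] mult_carrier_mat[of _ n n])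
  then show ?thesis using mult_proj_adjoint[OF W v1] mult_proj_adjoint[OF W v2] by simp
qed

lemma proj_smult_unit:
  assumes "cnj c * c = 1"
  shows "proj (c \<cdot>\<^sub>v v) = proj v"
proof -
  have "c * x * cnj (c * y) = x * cnj y" for x y
  proof -
    have "c * x * cnj (c * y) = (cnj c * c) * (x * cnj y)" by (simp only: complex_cnj_mult mult_ac)
    then show ?thesis using assms by simp
  qed
  then show ?thesis by (intro eq_matI) (auto simp: proj_def)
qed

lemma less_2_cases: "(k::nat) < 2 \<longleftrightarrow> k = 0 \<or> k = 1" by auto
lemma less_4_cases: "(k::nat) < 4 \<longleftrightarrow> k = 0 \<or> k = 1 \<or> k = 2 \<or> k = 3" by auto

lemma sum_upto_2: "(\<Sum>k\<in>{0..<2}. f k) = f 0 + f (1::nat)"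
  by (simp add: eval_nat_numeral)
lemma sum_upto_4: "(\<Sum>k\<in>{0..<4}. f k) = f 0 + f 1 + f 2 + f (3::nat)"
  by (simp add: eval_nat_numeral)

definition mat2 :: "complex \<Rightarrow> complex \<Rightarrow> complex \<Rightarrow> complex \<Rightarrow> complex mat" where
  "mat2 a b c d = mat 2 2 (\<lambda>(i,j). if i = 0 then (if j = 0 then a else b) else (if j = 0 then c else d))"

definition vec4 :: "complex \<Rightarrow> complex \<Rightarrow> complex \<Rightarrow> complex \<Rightarrow> complex vec" where
  "vec4 a b c d = vec 4 (\<lambda>i. if i = 0 then a else if i = 1 then b else if i = 2 then c else d)"

lemma mat2_carrier [simp]: "mat2 a b c d \<in> carrier_mat 2 2"
  by (simp add: mat2_def)

lemma mat2_dim [simp]: "dim_row (mat2 a b c d) = 2" "dim_col (mat2 a b c d) = 2"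
  by (simp_all add: mat2_def)

lemma mat2_index [simp]:
  "mat2 a b c d $$ (0,0) = a" "mat2 a b c d $$ (0,1) = b"
  "mat2 a b c d $$ (1,0) = c" "mat2 a b c d $$ (1,1) = d"
  "mat2 a b c d $$ (0,Suc 0) = b" "mat2 a b c d $$ (Suc 0,0) = c" "mat2 a b c d $$ (Suc 0,Suc 0) = d"
  by (simp_all add: mat2_def)

lemma mat2_entries: "A \<in> carrier_mat 2 2 \<Longrightarrow> A = mat2 (A $$ (0,0)) (A $$ (0,1)) (A $$ (1,0)) (A $$ (1,1))"
  by (rule eq_matI) (auto simp: mat2_def less_2_cases)

lemma mat2_mult:
  "mat2 a b c d * mat2 a' b' c' d' = mat2 (a*a' + b*c') (a*b' + b*d') (c*a' + d*c') (c*b' + d*d')"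
  by (rule eq_matI) (auto simp: mat2_def less_2_cases scalar_prod_def sum_upto_2)

lemma mat2_adjoint: "mat_adjoint (mat2 a b c d) = mat2 (cnj a) (cnj c) (cnj b) (cnj d)"
  by (rule eq_matI) (auto simp: mat2_def less_2_cases)

lemma mat2_transpose: "transpose_mat (mat2 a b c d) = mat2 a c b d"
  by (rule eq_matI) (auto simp: mat2_def less_2_cases)

lemma mat2_one: "1\<^sub>m 2 = mat2 1 0 0 1"
  by (rule eq_matI) (auto simp: mat2_def less_2_cases)

lemma mat2_eq_iff: "mat2 a b c d = mat2 a' b' c' d' \<longleftrightarrow> a = a' \<and> b = b' \<and> c = c' \<and> d = d'"
  by (metis mat2_index(1,4,5,6))

lemma vec4_carrier [simp]: "vec4 a b c d \<in> carrier_vec 4"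
  by (simp add: vec4_def)

lemma vec4_dim [simp]: "dim_vec (vec4 a b c d) = 4"
  by (simp add: vec4_def)

lemma vec4_index [simp]:
  "vec4 a b c d $ 0 = a" "vec4 a b c d $ 1 = b" "vec4 a b c d $ 2 = c" "vec4 a b c d $ 3 = d"
  "vec4 a b c d $ Suc 0 = b"
  by (simp_all add: vec4_def)

lemma vec4_entries: "w \<in> carrier_vec 4 \<Longrightarrow> w = vec4 (w $ 0) (w $ 1) (w $ 2) (w $ 3)"
  by (rule eq_vecI) (auto simp: vec4_def less_4_cases)

lemma vec4_smult: "k \<cdot>\<^sub>v vec4 a b c d = vec4 (k * a) (k * b) (k * c) (k * d)"
  by (rule eq_vecI) (auto simp: vec4_def less_4_cases)

lemma vec4_cscalar_prod:
  "vec4 a b c d \<bullet>c vec4 a' b' c' d' = a * cnj a' + b * cnj b' + c * cnj c' + d * cnj d'"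
  by (simp add: scalar_prod_def sum_upto_4)

lemma vec4_cscalar_prod_self:
  "vec4 a b c d \<bullet>c vec4 a b c d = complex_of_real ((cmod a)\<^sup>2 + (cmod b)\<^sup>2 + (cmod c)\<^sup>2 + (cmod d)\<^sup>2)"
  by (simp add: vec4_cscalar_prod flip: complex_norm_square)

lemma kron_dim [simp]:
  "dim_row (kron A B) = dim_row A * dim_row B" "dim_col (kron A B) = dim_col A * dim_col B"
  unfolding kron_def by auto

lemma kron_carrier [simp]:
  "A \<in> carrier_mat n1 m1 \<Longrightarrow> B \<in> carrier_mat n2 m2 \<Longrightarrow> kron A B \<in> carrier_mat (n1 * n2) (m1 * m2)"
  unfolding kron_def by (intro carrier_matI) auto

lemma kron_index:
  "A \<in> carrier_mat n1 m1 \<Longrightarrow> B \<in> carrier_mat n2 m2 \<Longrightarrow> i < n1 * n2 \<Longrightarrow> j < m1 * m2 \<Longrightarrow>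
    kron A B $$ (i,j) = A $$ (i div n2, j div m2) * B $$ (i mod n2, j mod m2)"
  unfolding kron_def by auto

text \<open>On coefficient matrices of two-qubit vectors, \<open>kron A B\<close> acts as \<open>X \<mapsto> A X B\<^sup>T\<close>.\<close>
lemma kron_mult_vec4:
  assumes A: "A \<in> carrier_mat 2 2" and B: "B \<in> carrier_mat 2 2"
    and M: "A * mat2 a b c d * transpose_mat B = mat2 p q r s"
  shows "kron A B *\<^sub>v vec4 a b c d = vec4 p q r s"
proof (rule eq_vecI)
  fix i assume "i < dim_vec (vec4 p q r s)"
  then have i: "i < 4" by simp
  have "(kron A B *\<^sub>v vec4 a b c d) $ i = (A * mat2 a b c d * transpose_mat B) $$ (i div 2, i mod 2)"
    using A B i kron_carrier[OF A B] unfolding less_4_cases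
    by (elim disjE)
       (simp_all add: kron_index[OF A B] carrier_matD[OF A] carrier_matD[OF B] sum_upto_4 sum_upto_2
        scalar_prod_def algebra_simps)
  then show "(kron A B *\<^sub>v vec4 a b c d) $ i = vec4 p q r s $ i"
    using i unfolding M less_4_cases by auto
qed (use A B in auto)

lemma kron_adjoint:
  assumes A: "A \<in> carrier_mat n1 m1" and B: "B \<in> carrier_mat n2 m2"
  shows "mat_adjoint (kron A B) = kron (mat_adjoint A) (mat_adjoint B)"
proof (rule eq_matI)
  fix i j assume "i < dim_row (kron (mat_adjoint A) (mat_adjoint B))"
    "j < dim_col (kron (mat_adjoint A) (mat_adjoint B))"
  then have i: "i < m1 * m2" and j: "j < n1 * n2" using A B by auto
  then have "m2 > 0" "n2 > 0" by (auto intro: gr0I)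
  then show "mat_adjoint (kron A B) $$ (i,j) = kron (mat_adjoint A) (mat_adjoint B) $$ (i,j)"
    using A B i j
    by (simp add: kron_index[OF A B] kron_index[OF mat_adjoint_carrier[OF A] mat_adjoint_carrier[OF B]]
        less_mult_imp_div_less)
qed (use A B in auto)

lemma kron_mult:
  assumes A: "A \<in> carrier_mat 2 2" and B: "B \<in> carrier_mat 2 2"
    and C: "C \<in> carrier_mat 2 2" and D: "D \<in> carrier_mat 2 2"
  shows "kron (A * B) (C * D) = kron A C * kron B D"
proof (rule eq_matI)
  fix i j assume "i < dim_row (kron A C * kron B D)" "j < dim_col (kron A C * kron B D)"
  then have i: "i < 4" and j: "j < 4" using A C B D by auto
  have "(kron A C * kron B D) $$ (i,j) = (\<Sum>k\<in>{0..<4}. kron A C $$ (i,k) * kron B D $$ (k,j))"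
    using A B C D i j by (simp add: scalar_prod_def)
  also have "\<dots> = (\<Sum>k\<in>{0..<4}. A $$ (i div 2, k div 2) * C $$ (i mod 2, k mod 2) *
      (B $$ (k div 2, j div 2) * D $$ (k mod 2, j mod 2)))"
    by (rule sum.cong) (auto simp: kron_index[OF A C] kron_index[OF B D] i j)
  also have "\<dots> = kron (A * B) (C * D) $$ (i,j)"
    using A B C D i j unfolding less_4_cases
    by (elim disjE; elim disjE)
       (simp_all add: kron_index[of _ 2 2 _ 2 2] sum_upto_4 sum_upto_2 scalar_prod_def algebra_simps)
  finally show "kron (A * B) (C * D) $$ (i,j) = (kron A C * kron B D) $$ (i,j)" by simp
qed (use A B C D in auto)

lemma kron_one: "kron (1\<^sub>m 2) (1\<^sub>m 2) = 1\<^sub>m 4"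
proof (rule eq_matI)
  fix i j assume "i < dim_row (1\<^sub>m 4 :: complex mat)" "j < dim_col (1\<^sub>m 4 :: complex mat)"
  then have "i < 4" "j < 4" by auto
  then show "kron (1\<^sub>m 2) (1\<^sub>m 2) $$ (i,j) = 1\<^sub>m 4 $$ (i,j)"
    unfolding less_4_cases by (elim disjE) (auto simp: kron_index[of _ 2 2 _ 2 2])
qed auto

lemma unitary_mat_kron:
  assumes A: "unitary_mat 2 A" and B: "unitary_mat 2 B"
  shows "unitary_mat 4 (kron A B)"
proof -
  note A' = unitary_matD[OF A] and B' = unitary_matD[OF B]
  have "mat_adjoint (kron A B) * kron A B = kron (mat_adjoint A * A) (mat_adjoint B * B)"
    using A'(1) B'(1) by (simp add: kron_adjoint kron_mult)
  then show ?thesis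
    using kron_carrier[OF A'(1) B'(1)] by (simp add: unitary_mat_def A'(2) B'(2) kron_one)
qed

section \<open>Schmidt decomposition\<close>

lemma complex_unit_phase: "\<exists>u. cnj u * u = 1 \<and> u * a = complex_of_real (cmod a)"
proof (cases "a = 0")
  case False
  have "cnj a * a = complex_of_real (cmod a) * complex_of_real (cmod a)"
    by (simp flip: complex_norm_square of_real_mult add: power2_eq_square mult.commute)
  then have "cnj (cnj a / cmod a) * (cnj a / cmod a) = 1 \<and> cnj a / cmod a * a = cmod a"
    using False by (simp add: field_simps)
  then show ?thesis by blast
qed (intro exI[of _ 1], simp)

lemma unitary_mat_mat2_iff:
  "unitary_mat 2 (mat2 a b c d) \<longleftrightarrow>
    cnj a * a + cnj c * c = 1 \<and> cnj a * b + cnj c * d = 0 \<and> cnj b * b + cnj d * d = 1"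
proof -
  have "cnj b * a + cnj d * c = cnj (cnj a * b + cnj c * d)" by simp
  then have "cnj b * a + cnj d * c = 0 \<longleftrightarrow> cnj a * b + cnj c * d = 0"
    by (simp only: complex_cnj_zero_iff)
  then show ?thesis
    by (auto simp: unitary_mat_def mat2_adjoint mat2_mult mat2_one mat2_eq_iff)
qed

lemma mat2_orthogonal_rows_diagonalize_first_row_nonzero:
  assumes xy: "x \<noteq> 0 \<or> y \<noteq> 0" and orth: "z * cnj x + w * cnj y = 0"
  shows "\<exists>P C r t. unitary_mat 2 P \<and> unitary_mat 2 C \<and> 0 \<le> r \<and> 0 \<le> t \<and>
    P * mat2 x y z w * C = mat2 (complex_of_real r) 0 0 (complex_of_real t)"
proof -
  define \<rho> where "\<rho> = sqrt ((cmod x)\<^sup>2 + (cmod y)\<^sup>2)"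
  define r where "r = complex_of_real \<rho>"
  have \<rho>: "\<rho> > 0" unfolding \<rho>_def using xy by (auto simp: add_pos_nonneg add_nonneg_pos)
  then have r: "r \<noteq> 0" "cnj r = r" unfolding r_def by auto
  have rr: "r * r = x * cnj x + y * cnj y"
    unfolding r_def \<rho>_def by (simp flip: of_real_mult complex_norm_square)
  define C where "C = mat2 (cnj x / r) (- y / r) (cnj y / r) (x / r)"
  have "cnj (cnj x / r) * (cnj x / r) + cnj (cnj y / r) * (cnj y / r) = (x * cnj x + y * cnj y) / (r * r)"
    "cnj (- y / r) * (- y / r) + cnj (x / r) * (x / r) = (x * cnj x + y * cnj y) / (r * r)"
    using r by (simp_all add: add_divide_distrib algebra_simps)
  then have "unitary_mat 2 C"
    unfolding C_def unitary_mat_mat2_iff using r by (simp add: field_simps flip: rr)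
  define \<delta> where "\<delta> = x * w - y * z"
  obtain u where u: "cnj u * u = 1" "u * \<delta> = complex_of_real (cmod \<delta>)"
    using complex_unit_phase by blast
  define P where "P = mat2 1 0 0 u"
  have "unitary_mat 2 P" unfolding P_def unitary_mat_mat2_iff using u by simp
  have "x * (cnj x / r) + y * (cnj y / r) = r" "z * (cnj x / r) + w * (cnj y / r) = 0"
    using r orth by (simp_all add: add_divide_distrib[symmetric] flip: rr)
  then have "mat2 x y z w * C = mat2 r 0 0 (\<delta> / r)"
    unfolding C_def mat2_mult mat2_eq_iff \<delta>_def using r by (simp add: field_simps)
  then have "P * mat2 x y z w * C = P * mat2 r 0 0 (\<delta> / r)"
    by (subst assoc_mult_mat[of _ 2 2 _ 2 _ 2]) (simp_all add: P_def C_def)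
  also have "\<dots> = mat2 \<rho> 0 0 (cmod \<delta> / \<rho>)"
    unfolding P_def using u by (simp add: mat2_mult mat2_eq_iff r_def)
  finally have "P * mat2 x y z w * C = mat2 \<rho> 0 0 (cmod \<delta> / \<rho>)" .
  moreover have "0 \<le> \<rho>" "0 \<le> cmod \<delta> / \<rho>" using \<rho> by auto
  ultimately show ?thesis using \<open>unitary_mat 2 C\<close> \<open>unitary_mat 2 P\<close> by blast
qed

lemma mat2_orthogonal_rows_diagonalize:
  assumes orth: "z * cnj x + w * cnj y = 0"
  shows "\<exists>P C r t. unitary_mat 2 P \<and> unitary_mat 2 C \<and> 0 \<le> r \<and> 0 \<le> t \<and>
    P * mat2 x y z w * C = mat2 (complex_of_real r) 0 0 (complex_of_real t)"
proof -
  consider "x \<noteq> 0 \<or> y \<noteq> 0" | "x = 0" "y = 0" "z \<noteq> 0 \<or> w \<noteq> 0" | "x = 0" "y = 0" "z = 0" "w = 0"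
    by blast
  then show ?thesis
  proof cases
    case 1
    then show ?thesis using mat2_orthogonal_rows_diagonalize_first_row_nonzero[OF _ orth] by blast
  next
    case 2
    then obtain P C r t where PC: "unitary_mat 2 P" "unitary_mat 2 C" "0 \<le> r" "0 \<le> t"
      and diag: "P * mat2 z w 0 0 * C = mat2 (complex_of_real r) 0 0 (complex_of_real t)"
      using mat2_orthogonal_rows_diagonalize_first_row_nonzero[of z w 0 0] by auto
    define S where "S = mat2 0 1 1 0"
    have "unitary_mat 2 (P * S)"
      using PC(1) by (rule unitary_mat_mult) (simp add: S_def unitary_mat_mat2_iff)
    moreover have "P * S * mat2 x y z w * C = P * mat2 z w 0 0 * C"
      using 2 unitary_matD(1)[OF PC(1)] unitary_matD(1)[OF PC(2)]
      by (simp add: S_def mat2_mult assoc_mult_mat[of _ 2 2 _ 2 _ 2])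
    ultimately show ?thesis using PC diag by metis
  next
    case 3
    then have "1\<^sub>m 2 * mat2 x y z w * 1\<^sub>m 2 = mat2 (complex_of_real 0) 0 0 (complex_of_real 0)" by simp
    moreover have "unitary_mat 2 (1\<^sub>m 2)" by (simp add: unitary_mat_def)
    ultimately show ?thesis by fastforce
  qed
qed

lemma mat2_singular_value_decomposition:
  assumes M: "M \<in> carrier_mat 2 2"
  shows "\<exists>U V r t. unitary_mat 2 U \<and> unitary_mat 2 V \<and> 0 \<le> r \<and> 0 \<le> t \<and>
    U * M * V = mat2 (complex_of_real r) 0 0 (complex_of_real t)"
proof -
  have aM: "mat_adjoint M \<in> carrier_mat 2 2" using M by simp
  have "M * mat_adjoint M \<in> carrier_mat 2 2" "hermitian_mat (M * mat_adjoint M)"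
    using M by (auto simp: hermitian_mat_def mat_adjoint_mult[OF M aM])
  then obtain X Dg where X: "unitary_mat 2 X" and Dg: "Dg \<in> carrier_mat 2 2" "diagonal_mat Dg"
    and MM: "M * mat_adjoint M = X * Dg * mat_adjoint X"
    using hermitian_unitary_diagonalization by blast
  note X' = unitary_matD[OF X]
  have aX: "mat_adjoint X \<in> carrier_mat 2 2" using X' by simp
  define K where "K = mat_adjoint X * M"
  have Kc: "K \<in> carrier_mat 2 2" unfolding K_def using aX M by simp
  have "K * mat_adjoint K = mat_adjoint X * (M * mat_adjoint M) * X"
    unfolding K_def using X'(1) M
    by (simp add: mat_adjoint_mult[OF aX M] assoc_mult_mat[of _ 2 2 _ 2 _ 2] mult_carrier_mat[of _ 2 2])
  also have "\<dots> = (mat_adjoint X * X) * Dg * (mat_adjoint X * X)"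
    unfolding MM using X'(1) Dg by (simp add: assoc_mult_mat[of _ 2 2 _ 2 _ 2] mult_carrier_mat[of _ 2 2])
  finally have KK: "K * mat_adjoint K = Dg" using Dg by (simp add: X'(2))
  obtain x y z w where K: "K = mat2 x y z w" using mat2_entries[OF Kc] by blast
  have "z * cnj x + w * cnj y = (K * mat_adjoint K) $$ (1,0)" by (simp add: K mat2_adjoint mat2_mult)
  then have "z * cnj x + w * cnj y = 0" using Dg unfolding KK diagonal_mat_def by simp
  then obtain P C r t where PC: "unitary_mat 2 P" "unitary_mat 2 C" "0 \<le> r" "0 \<le> t"
    and diag: "P * K * C = mat2 (complex_of_real r) 0 0 (complex_of_real t)"
    unfolding K by (blast dest: mat2_orthogonal_rows_diagonalize)
  have "P * mat_adjoint X * M * C = P * K * C"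
    unfolding K_def using PC X'(1) M unitary_matD(1)[OF PC(1)] unitary_matD(1)[OF PC(2)]
    by (simp add: assoc_mult_mat[of _ 2 2 _ 2 _ 2] mult_carrier_mat[of _ 2 2])
  moreover have "unitary_mat 2 (P * mat_adjoint X)"
    using PC(1) unitary_mat_adjoint[OF X] by (rule unitary_mat_mult)
  ultimately show ?thesis using PC diag by metis
qed

definition psi1 :: "real \<Rightarrow> complex vec" where
  "psi1 \<theta> = vec4 (complex_of_real (cos \<theta>)) 0 0 (complex_of_real (sin \<theta>))"

theorem two_qubit_schmidt_decomposition:
  assumes v: "v \<in> carrier_vec 4" and nv: "v \<bullet>c v = 1"
  shows "\<exists>UA UB \<theta>. unitary_mat 2 UA \<and> unitary_mat 2 UB \<and> 0 \<le> \<theta> \<and> \<theta> \<le> pi/2 \<and>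
    kron UA UB *\<^sub>v v = psi1 \<theta>"
proof -
  obtain a b c d where v4: "v = vec4 a b c d" using vec4_entries[OF v] by blast
  obtain UA V r t where UA: "unitary_mat 2 UA" and V: "unitary_mat 2 V" and rt: "0 \<le> r" "0 \<le> t"
    and diag: "UA * mat2 a b c d * V = mat2 (complex_of_real r) 0 0 (complex_of_real t)"
    using mat2_singular_value_decomposition[OF mat2_carrier] by blast
  define UB where "UB = transpose_mat V"
  have UB: "unitary_mat 2 UB" unfolding UB_def using V by (rule unitary_mat_transpose)
  have Kv: "kron UA UB *\<^sub>v v = vec4 r 0 0 t"
    unfolding v4 UB_def
    by (rule kron_mult_vec4) (use unitary_matD(1)[OF UA] unitary_matD(1)[OF V] diag in simp_all)
  have "complex_of_real (r\<^sup>2 + t\<^sup>2) = (kron UA UB *\<^sub>v v) \<bullet>c (kron UA UB *\<^sub>v v)"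
    unfolding Kv vec4_cscalar_prod_self by simp
  also have "\<dots> = 1" using unitary_cscalar_prod[OF unitary_mat_kron[OF UA UB] v v] nv by simp
  finally have "r\<^sup>2 + t\<^sup>2 = 1" by (simp only: of_real_eq_1_iff)
  then obtain \<theta> where "0 \<le> \<theta>" "\<theta> \<le> pi/2" "r = cos \<theta>" "t = sin \<theta>"
    using sincos_total_pi_half rt by blast
  with UA UB Kv show ?thesis unfolding psi1_def by blast
qed

section \<open>Normal form of the second eigenvector\<close>

definition psi2 :: "real \<Rightarrow> real \<Rightarrow> real \<Rightarrow> real \<Rightarrow> complex vec" where
  "psi2 \<theta> \<phi> \<alpha> \<beta> =
    vec4 (exp (\<i> * complex_of_real \<beta>) * complex_of_real (sin \<phi> * sin \<theta>))
      (complex_of_real (cos \<phi> * cos \<alpha>)) (complex_of_real (cos \<phi> * sin \<alpha>))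
      (- exp (\<i> * complex_of_real \<beta>) * complex_of_real (sin \<phi> * cos \<theta>))"

lemma psi1_eq_ket2:
  "complex_of_real (cos \<theta>) \<cdot>\<^sub>v ket2 0 0 + complex_of_real (sin \<theta>) \<cdot>\<^sub>v ket2 1 1 = psi1 \<theta>"
  by (rule eq_vecI) (auto simp: psi1_def vec4_def ket2_def less_4_cases)

lemma psi2_eq_ket2:
  "complex_of_real (cos \<phi>) \<cdot>\<^sub>v
      (complex_of_real (cos \<alpha>) \<cdot>\<^sub>v ket2 0 1 + complex_of_real (sin \<alpha>) \<cdot>\<^sub>v ket2 1 0)
    + (exp (\<i> * complex_of_real \<beta>) * complex_of_real (sin \<phi>)) \<cdot>\<^sub>v
      (complex_of_real (sin \<theta>) \<cdot>\<^sub>v ket2 0 0 - complex_of_real (cos \<theta>) \<cdot>\<^sub>v ket2 1 1)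
   = psi2 \<theta> \<phi> \<alpha> \<beta>"
  by (rule eq_vecI) (auto simp: psi2_def vec4_def ket2_def less_4_cases)

lemma orthogonal_to_psi1:
  assumes w: "w \<in> carrier_vec 4" and orth: "w \<bullet>c psi1 \<theta> = 0"
  shows "\<exists>\<gamma> a1 a2. w = vec4 (\<gamma> * complex_of_real (sin \<theta>)) a1 a2 (- \<gamma> * complex_of_real (cos \<theta>))"
proof -
  obtain a0 a1 a2 a3 where w4: "w = vec4 a0 a1 a2 a3" using vec4_entries[OF w] by blast
  define c where "c = complex_of_real (cos \<theta>)"
  define s where "s = complex_of_real (sin \<theta>)"
  have cs: "s * s + c * c = 1"
  proof -
    have "s * s + c * c = complex_of_real ((sin \<theta>)\<^sup>2 + (cos \<theta>)\<^sup>2)"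
      unfolding c_def s_def by (simp add: power2_eq_square)
    then show ?thesis by simp
  qed
  have orth': "a0 * c + a3 * s = 0" using orth by (simp add: w4 psi1_def vec4_cscalar_prod c_def s_def)
  define \<gamma> where "\<gamma> = s * a0 - c * a3"
  have "a0 = \<gamma> * s"
  proof -
    have "\<gamma> * s - a0 = a0 * (s * s + c * c - 1) - c * (a0 * c + a3 * s)"
      unfolding \<gamma>_def by (simp add: algebra_simps)
    then show ?thesis using cs orth' by simp
  qed
  moreover have "a3 = - \<gamma> * c"
  proof -
    have "- \<gamma> * c - a3 = a3 * (s * s + c * c - 1) - s * (a0 * c + a3 * s)"
      unfolding \<gamma>_def by (simp add: algebra_simps)
    then show ?thesis using cs orth' by simp
  qed
  ultimately show ?thesis unfolding w4 c_def s_def by blast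
qed

lemma unit_cmod_iff: "cnj z * z = 1 \<longleftrightarrow> cmod z = 1"
proof -
  have "cnj z * z = complex_of_real ((cmod z)\<^sup>2)" by (simp only: complex_norm_square mult.commute)
  then have "cnj z * z = 1 \<longleftrightarrow> (cmod z)\<^sup>2 = 1" by (metis of_real_eq_1_iff)
  also have "\<dots> \<longleftrightarrow> cmod z = 1" using norm_ge_zero[of z] power2_eq_1_iff[of "cmod z"] by linarith
  finally show ?thesis .
qed

text \<open>Opposite phases on the two qubits together with a global phase rotate the
  coefficients of \<open>|01\<rangle>\<close> and \<open>|10\<rangle>\<close> independently.\<close>
lemma opposite_phases_align:
  "\<exists>\<eta> g. cnj \<eta> * \<eta> = 1 \<and> cnj g * g = 1 \<and>
     g * (cnj \<eta> * a1) = complex_of_real (cmod a1) \<and> g * (\<eta> * a2) = complex_of_real (cmod a2)"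
proof -
  obtain u1 u2 where u: "cnj u1 * u1 = 1" "u1 * a1 = cmod a1" "cnj u2 * u2 = 1" "u2 * a2 = cmod a2"
    using complex_unit_phase by metis
  define \<eta> where "\<eta> = csqrt (u2 * cnj u1)"
  have \<eta>\<eta>: "\<eta> * \<eta> = u2 * cnj u1" unfolding \<eta>_def by (simp flip: power2_eq_square)
  have "(cmod \<eta>)\<^sup>2 = cmod u2 * cmod u1"
    by (simp only: power2_eq_square flip: norm_mult) (simp add: \<eta>\<eta> norm_mult)
  then have "(cmod \<eta>)\<^sup>2 = 1" using u by (simp add: unit_cmod_iff)
  then have "cmod \<eta> = 1" using norm_ge_zero[of \<eta>] power2_eq_1_iff[of "cmod \<eta>"] by linarith
  then have \<eta>: "cnj \<eta> * \<eta> = 1" by (simp add: unit_cmod_iff)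
  have "(u1 * \<eta>) * (cnj \<eta> * a1) = (cnj \<eta> * \<eta>) * (u1 * a1)" by (simp only: mult_ac)
  then have 1: "(u1 * \<eta>) * (cnj \<eta> * a1) = cmod a1" using u \<eta> by simp
  have "(u1 * \<eta>) * (\<eta> * a2) = (\<eta> * \<eta>) * (u1 * a2)" by (simp only: mult_ac)
  also have "\<dots> = (cnj u1 * u1) * (u2 * a2)" by (simp only: \<eta>\<eta> mult_ac)
  finally have "(u1 * \<eta>) * (\<eta> * a2) = (cnj u1 * u1) * (u2 * a2)" .
  then have 2: "(u1 * \<eta>) * (\<eta> * a2) = cmod a2" using u by simp
  have "cnj (u1 * \<eta>) * (u1 * \<eta>) = (cnj u1 * u1) * (cnj \<eta> * \<eta>)" by (simp only: complex_cnj_mult mult_ac)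
  then have "cnj (u1 * \<eta>) * (u1 * \<eta>) = 1" using u \<eta> by simp
  with 1 2 \<eta> show ?thesis by blast
qed

lemma kron_opposite_phases_vec4:
  assumes "cnj \<eta> * \<eta> = 1"
  shows "kron (mat2 1 0 0 \<eta>) (mat2 1 0 0 (cnj \<eta>)) *\<^sub>v vec4 p q r t = vec4 p (cnj \<eta> * q) (\<eta> * r) t"
proof -
  have t: "\<eta> * (t * cnj \<eta>) = t" using assms by (metis mult.commute mult.left_commute mult_1_right)
  show ?thesis by (rule kron_mult_vec4) (simp_all add: mat2_transpose mat2_mult algebra_simps t)
qed

lemma exp_i_polar: "\<exists>\<beta>. 0 \<le> \<beta> \<and> \<beta> \<le> 2 * pi \<and> exp (\<i> * complex_of_real \<beta>) * complex_of_real (cmod z) = z"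
proof (cases "z = 0")
  case False
  define u where "u = z / complex_of_real (cmod z)"
  have "(Re u)\<^sup>2 + (Im u)\<^sup>2 = 1"
    using False unfolding u_def by (simp add: power_divide add_divide_distrib[symmetric] cmod_power2[symmetric])
  then obtain \<beta> where "0 \<le> \<beta>" "\<beta> \<le> 2 * pi" "Re u = cos \<beta>" "Im u = sin \<beta>"
    using sincos_total_2pi_le by blast
  moreover from this have "exp (\<i> * complex_of_real \<beta>) = u"
    by (simp add: cis_conv_exp[symmetric] complex_eq_iff)
  ultimately show ?thesis using False unfolding u_def by auto
qed auto

lemma psi2_angles:
  assumes b: "0 \<le> b1" "0 \<le> b2" and norm: "b1\<^sup>2 + b2\<^sup>2 + (cmod \<epsilon>)\<^sup>2 = 1"
  shows "\<exists>\<phi> \<alpha> \<beta>. 0 \<le> \<phi> \<and> \<phi> \<le> pi/2 \<and> 0 \<le> \<alpha> \<and> \<alpha> \<le> pi/2 \<and> 0 \<le> \<beta> \<and> \<beta> \<le> 2 * pi \<and>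
    cos \<phi> * cos \<alpha> = b1 \<and> cos \<phi> * sin \<alpha> = b2 \<and> exp (\<i> * complex_of_real \<beta>) * sin \<phi> = \<epsilon>"
proof -
  define X where "X = sqrt (b1\<^sup>2 + b2\<^sup>2)"
  have X: "X \<ge> 0" "X\<^sup>2 = b1\<^sup>2 + b2\<^sup>2" unfolding X_def by simp_all
  then obtain \<phi> where \<phi>: "0 \<le> \<phi>" "\<phi> \<le> pi/2" "X = cos \<phi>" "cmod \<epsilon> = sin \<phi>"
    using sincos_total_pi_half[of X "cmod \<epsilon>"] norm by auto
  obtain \<alpha> where \<alpha>: "0 \<le> \<alpha>" "\<alpha> \<le> pi/2" "X * cos \<alpha> = b1" "X * sin \<alpha> = b2"
  proof (cases "X = 0")
    case True
    then have "b1 = 0" "b2 = 0" using X b by (simp_all add: add_nonneg_eq_0_iff)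
    with True show ?thesis using that[of 0] by simp
  next
    case False
    have "(b1 / X)\<^sup>2 + (b2 / X)\<^sup>2 = X\<^sup>2 / X\<^sup>2" by (simp only: power_divide add_divide_distrib[symmetric] X(2))
    then have "(b1 / X)\<^sup>2 + (b2 / X)\<^sup>2 = 1" using False by simp
    then obtain \<alpha> where "0 \<le> \<alpha>" "\<alpha> \<le> pi/2" "b1 / X = cos \<alpha>" "b2 / X = sin \<alpha>"
      using sincos_total_pi_half b X(1) by (metis divide_nonneg_nonneg)
    with False show ?thesis using that[of \<alpha>] by (simp add: field_simps)
  qed
  obtain \<beta> where "0 \<le> \<beta>" "\<beta> \<le> 2 * pi" "exp (\<i> * complex_of_real \<beta>) * cmod \<epsilon> = \<epsilon>"
    using exp_i_polar by blast
  with \<phi> \<alpha> show ?thesis by metis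
qed

lemma psi2_normal_form:
  assumes norm: "vec4 (\<gamma> * complex_of_real (sin \<theta>)) a1 a2 (- \<gamma> * complex_of_real (cos \<theta>)) \<bullet>c vec4 (\<gamma> * complex_of_real (sin \<theta>)) a1 a2 (- \<gamma> * complex_of_real (cos \<theta>)) = 1"
  shows "\<exists>\<eta> g \<phi> \<alpha> \<beta>. cnj \<eta> * \<eta> = 1 \<and> cnj g * g = 1 \<and>
    0 \<le> \<phi> \<and> \<phi> \<le> pi/2 \<and> 0 \<le> \<alpha> \<and> \<alpha> \<le> pi/2 \<and> 0 \<le> \<beta> \<and> \<beta> \<le> 2 * pi \<and>
    g \<cdot>\<^sub>v (kron (mat2 1 0 0 \<eta>) (mat2 1 0 0 (cnj \<eta>)) *\<^sub>v vec4 (\<gamma> * complex_of_real (sin \<theta>)) a1 a2 (- \<gamma> * complex_of_real (cos \<theta>)))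
      = psi2 \<theta> \<phi> \<alpha> \<beta>"
proof -
  obtain \<eta> g where \<eta>g: "cnj \<eta> * \<eta> = 1" "cnj g * g = 1"
    and a: "g * (cnj \<eta> * a1) = cmod a1" "g * (\<eta> * a2) = cmod a2"
    using opposite_phases_align by blast
  have "(cmod (\<gamma> * complex_of_real (sin \<theta>)))\<^sup>2 + (cmod a1)\<^sup>2 + (cmod a2)\<^sup>2
      + (cmod (- \<gamma> * complex_of_real (cos \<theta>)))\<^sup>2 = 1"
    using norm unfolding vec4_cscalar_prod_self by (simp only: of_real_eq_1_iff)
  then have "(cmod \<gamma>)\<^sup>2 * (sin \<theta>)\<^sup>2 + (cmod a1)\<^sup>2 + (cmod a2)\<^sup>2 + (cmod \<gamma>)\<^sup>2 * (cos \<theta>)\<^sup>2 = 1"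
    by (simp add: norm_mult power_mult_distrib)
  moreover have "(cmod \<gamma>)\<^sup>2 * (sin \<theta>)\<^sup>2 + (cmod \<gamma>)\<^sup>2 * (cos \<theta>)\<^sup>2 = (cmod \<gamma>)\<^sup>2"
    by (simp flip: distrib_left)
  moreover have "(cmod (g * \<gamma>))\<^sup>2 = (cmod \<gamma>)\<^sup>2" using \<eta>g(2) by (simp add: norm_mult unit_cmod_iff)
  ultimately have "(cmod a1)\<^sup>2 + (cmod a2)\<^sup>2 + (cmod (g * \<gamma>))\<^sup>2 = 1" by linarith
  then obtain \<phi> \<alpha> \<beta> where angles: "0 \<le> \<phi>" "\<phi> \<le> pi/2" "0 \<le> \<alpha>" "\<alpha> \<le> pi/2" "0 \<le> \<beta>" "\<beta> \<le> 2 * pi"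
    and b: "cos \<phi> * cos \<alpha> = cmod a1" "cos \<phi> * sin \<alpha> = cmod a2"
      "exp (\<i> * complex_of_real \<beta>) * sin \<phi> = g * \<gamma>"
    using psi2_angles[of "cmod a1" "cmod a2" "g * \<gamma>"] by auto
  have "g \<cdot>\<^sub>v (kron (mat2 1 0 0 \<eta>) (mat2 1 0 0 (cnj \<eta>)) *\<^sub>v vec4 (\<gamma> * complex_of_real (sin \<theta>)) a1 a2 (- \<gamma> * complex_of_real (cos \<theta>)))
      = vec4 (g * \<gamma> * complex_of_real (sin \<theta>)) (complex_of_real (cmod a1)) (complex_of_real (cmod a2))
          (- (g * \<gamma>) * complex_of_real (cos \<theta>))"
    unfolding kron_opposite_phases_vec4[OF \<eta>g(1)] vec4_smult a by (simp add: mult.assoc)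
  also have "\<dots> = psi2 \<theta> \<phi> \<alpha> \<beta>"
    unfolding psi2_def b(3)[symmetric] b(1,2)[symmetric] by (simp add: mult.assoc)
  finally show ?thesis using \<eta>g angles by blast
qed

lemma orthogonal_pair_normal_form:
  assumes UA: "unitary_mat 2 UA" and UB: "unitary_mat 2 UB"
    and v1: "v1 \<in> carrier_vec 4" and v2: "v2 \<in> carrier_vec 4"
    and unit: "v2 \<bullet>c v2 = 1" and orth: "v2 \<bullet>c v1 = 0" and schmidt: "kron UA UB *\<^sub>v v1 = psi1 \<theta>"
  shows "\<exists>UA' UB' \<phi> \<alpha> \<beta> g. unitary_mat 2 UA' \<and> unitary_mat 2 UB' \<and>
    0 \<le> \<phi> \<and> \<phi> \<le> pi/2 \<and> 0 \<le> \<alpha> \<and> \<alpha> \<le> pi/2 \<and> 0 \<le> \<beta> \<and> \<beta> \<le> 2 * pi \<and> cnj g * g = 1 \<and>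
    kron UA' UB' *\<^sub>v v1 = psi1 \<theta> \<and> g \<cdot>\<^sub>v (kron UA' UB' *\<^sub>v v2) = psi2 \<theta> \<phi> \<alpha> \<beta>"
proof -
  define K where "K = kron UA UB"
  have K: "unitary_mat 4 K" unfolding K_def using UA UB by (rule unitary_mat_kron)
  have "(K *\<^sub>v v2) \<bullet>c (K *\<^sub>v v2) = 1" "(K *\<^sub>v v2) \<bullet>c psi1 \<theta> = 0"
    using unitary_cscalar_prod[OF K v2 v2] unitary_cscalar_prod[OF K v2 v1] unit orth schmidt
    by (simp_all add: K_def)
  moreover have "K *\<^sub>v v2 \<in> carrier_vec 4" using unitary_matD(1)[OF K] v2 by simp
  ultimately obtain \<gamma> a1 a2 where w2:
    "K *\<^sub>v v2 = vec4 (\<gamma> * complex_of_real (sin \<theta>)) a1 a2 (- \<gamma> * complex_of_real (cos \<theta>))"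
    and "vec4 (\<gamma> * complex_of_real (sin \<theta>)) a1 a2 (- \<gamma> * complex_of_real (cos \<theta>)) \<bullet>c
      vec4 (\<gamma> * complex_of_real (sin \<theta>)) a1 a2 (- \<gamma> * complex_of_real (cos \<theta>)) = 1"
    using orthogonal_to_psi1 by metis
  then obtain \<eta> g \<phi> \<alpha> \<beta> where \<eta>: "cnj \<eta> * \<eta> = 1" and g: "cnj g * g = 1"
    and angles: "0 \<le> \<phi>" "\<phi> \<le> pi/2" "0 \<le> \<alpha>" "\<alpha> \<le> pi/2" "0 \<le> \<beta>" "\<beta> \<le> 2 * pi"
    and psi2: "g \<cdot>\<^sub>v (kron (mat2 1 0 0 \<eta>) (mat2 1 0 0 (cnj \<eta>)) *\<^sub>v (K *\<^sub>v v2)) = psi2 \<theta> \<phi> \<alpha> \<beta>"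
    unfolding w2 by (blast dest: psi2_normal_form)
  define PA where "PA = mat2 1 0 0 \<eta>"
  define PB where "PB = mat2 1 0 0 (cnj \<eta>)"
  have P: "unitary_mat 2 PA" "unitary_mat 2 PB"
    using \<eta> by (simp_all add: PA_def PB_def unitary_mat_mat2_iff mult.commute)
  have KP: "kron (PA * UA) (PB * UB) = kron PA PB * K"
    unfolding K_def by (rule kron_mult) (use unitary_matD(1)[OF UA] unitary_matD(1)[OF UB] in \<open>simp_all add: PA_def PB_def\<close>)
  have KPv: "kron (PA * UA) (PB * UB) *\<^sub>v v = kron PA PB *\<^sub>v (K *\<^sub>v v)" if "v \<in> carrier_vec 4" for v
    unfolding KP using unitary_matD(1)[OF K] that kron_carrier[of PA 2 2 PB 2 2]
    by (simp add: PA_def PB_def)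
  have "kron (PA * UA) (PB * UB) *\<^sub>v v1 = kron PA PB *\<^sub>v psi1 \<theta>"
    using KPv[OF v1] schmidt by (simp add: K_def)
  also have "\<dots> = psi1 \<theta>" unfolding PA_def PB_def psi1_def kron_opposite_phases_vec4[OF \<eta>] by simp
  finally have "kron (PA * UA) (PB * UB) *\<^sub>v v1 = psi1 \<theta>" .
  moreover have "unitary_mat 2 (PA * UA)" "unitary_mat 2 (PB * UB)"
    using unitary_mat_mult P UA UB by blast+
  moreover have "g \<cdot>\<^sub>v (kron (PA * UA) (PB * UB) *\<^sub>v v2) = psi2 \<theta> \<phi> \<alpha> \<beta>"
    unfolding KPv[OF v2] using psi2 by (simp add: PA_def PB_def)
  ultimately show ?thesis using angles g by blast
qed

theorem mainTheorem1:
  fixes \<sigma> :: "complex mat"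
  assumes "density_mat 4 \<sigma>"
    and "vec_space.rank 4 \<sigma> \<le> 2"
  shows "\<exists>UA UB (\<theta>::real) (\<phi>::real) (\<alpha>::real) (\<beta>::real) (\<nu>1::real) (\<nu>2::real).
    unitary_mat 2 UA \<and> unitary_mat 2 UB \<and>
    \<theta> \<in> {0..pi/2} \<and> \<phi> \<in> {0..pi/2} \<and> \<alpha> \<in> {0..pi/2} \<and> \<beta> \<in> {0..2*pi} \<and>
    \<nu>1 \<in> {0..1} \<and> \<nu>2 \<in> {0..1} \<and> \<nu>1 + \<nu>2 = 1 \<and>
    (let \<psi>1 = complex_of_real (cos \<theta>) \<cdot>\<^sub>v ket2 0 0 + complex_of_real (sin \<theta>) \<cdot>\<^sub>v ket2 1 1;
         \<psi>2 = complex_of_real (cos \<phi>) \<cdot>\<^sub>v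
                 (complex_of_real (cos \<alpha>) \<cdot>\<^sub>v ket2 0 1 + complex_of_real (sin \<alpha>) \<cdot>\<^sub>v ket2 1 0)
             + (exp (\<i> * complex_of_real \<beta>) * complex_of_real (sin \<phi>)) \<cdot>\<^sub>v
                 (complex_of_real (sin \<theta>) \<cdot>\<^sub>v ket2 0 0 - complex_of_real (cos \<theta>) \<cdot>\<^sub>v ket2 1 1)
     in kron UA UB * \<sigma> * mat_adjoint (kron UA UB)
        = complex_of_real \<nu>1 \<cdot>\<^sub>m proj \<psi>1 + complex_of_real \<nu>2 \<cdot>\<^sub>m proj \<psi>2)"
proof -
  obtain v1 v2 \<nu>1 \<nu>2 where v: "v1 \<in> carrier_vec 4" "v2 \<in> carrier_vec 4"
    and unit: "v1 \<bullet>c v1 = 1" "v2 \<bullet>c v2 = 1" and orth: "v2 \<bullet>c v1 = 0"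
    and \<nu>: "\<nu>1 \<ge> 0" "\<nu>2 \<ge> 0" "\<nu>1 + \<nu>2 = 1"
    and \<sigma>: "\<sigma> = complex_of_real \<nu>1 \<cdot>\<^sub>m proj v1 + complex_of_real \<nu>2 \<cdot>\<^sub>m proj v2"
    using density_mat_rank_le_2_mixture[OF assms] by blast
  obtain UA UB \<theta> where UA: "unitary_mat 2 UA" and UB: "unitary_mat 2 UB" and \<theta>: "0 \<le> \<theta>" "\<theta> \<le> pi/2"
    and "kron UA UB *\<^sub>v v1 = psi1 \<theta>"
    using two_qubit_schmidt_decomposition[OF v(1) unit(1)] by blast
  then obtain UA' UB' \<phi> \<alpha> \<beta> g where U': "unitary_mat 2 UA'" "unitary_mat 2 UB'"
    and angles: "0 \<le> \<phi>" "\<phi> \<le> pi/2" "0 \<le> \<alpha>" "\<alpha> \<le> pi/2" "0 \<le> \<beta>" "\<beta> \<le> 2 * pi"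
    and g: "cnj g * g = 1" and K1: "kron UA' UB' *\<^sub>v v1 = psi1 \<theta>"
    and K2: "g \<cdot>\<^sub>v (kron UA' UB' *\<^sub>v v2) = psi2 \<theta> \<phi> \<alpha> \<beta>"
    using orthogonal_pair_normal_form[OF UA UB v(1,2) unit(2) orth] by blast
  have "proj (kron UA' UB' *\<^sub>v v2) = proj (psi2 \<theta> \<phi> \<alpha> \<beta>)"
    unfolding K2[symmetric] proj_smult_unit[OF g] ..
  then have "kron UA' UB' * \<sigma> * mat_adjoint (kron UA' UB') =
      complex_of_real \<nu>1 \<cdot>\<^sub>m proj (psi1 \<theta>) + complex_of_real \<nu>2 \<cdot>\<^sub>m proj (psi2 \<theta> \<phi> \<alpha> \<beta>)"
    unfolding \<sigma> using mult_mixture_adjoint[OF unitary_matD(1)[OF unitary_mat_kron[OF U']] v] K1 by simp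
  moreover have "\<nu>1 \<le> 1" "\<nu>2 \<le> 1" using \<nu> by auto
  ultimately show ?thesis using U' \<theta> angles \<nu>
    unfolding Let_def psi1_eq_ket2 psi2_eq_ket2 atLeastAtMost_iff by blast
qed

end
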